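(* Let $\lambda,\mu\ge0$ with $\lambda\mu\neq1$, $a=1+\lambda^2$, $b=1+\mu^2$, and let $$D_w(p)=(1-\lambda^2p^2)(1-\mu^2p^2)-(\lambda^2-p^2)(\mu^2-p^2)p^{2w}.$$ Then for all $w$ sufficiently large and all integers $n\ge0$, $$Z_{n,w}(a,b)=\frac{1+\lambda^2}{4}\sum_{p_k}\frac{(1-p_k^2)^2}{(\lambda^2-p_k^2)(1-\lambda^2p_k^2)}\left(\frac{1+p_k^2}{p_k}\right)^n\frac{1}{w+\varepsilon_k},$$ where the sum runs over the zeros $p_k$ of $D_w$ with $p_k\neq\pm1$, and $$\varepsilon_k=p_k^2\left[\frac{\lambda^2}{1-\lambda^2p_k^2}-\frac{1}{\lambda^2-p_k^2}+\frac{\mu^2}{1-\mu^2p_k^2}-\frac{1}{\mu^2-p_k^2}\right].$$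
   Context: A loop of length $n$ in the slit of width $w$ is a lattice path in $\mathbb{Z}^2$ with $n$ steps, each equal to $(1,1)$ or $(1,-1)$, starting at $(0,0)$ and ending at $(n,0)$, all of whose vertices $(x,y)$ satisfy $0\le y\le w$. For such a path $P$, let $u(P)$ be the number of its vertices on the line $y=0$ excluding the initial vertex, and $v(P)$ the number of its vertices on the line $y=w$. The partition function is $Z_{n,w}(a,b)=\sum_P a^{u(P)}b^{v(P)}$, the sum over all loops of length $n$ in the slit of width $w$. *)

theory Defs
  imports Complex_Main
begin

text \<open>A path of length n is encoded by its list of steps (each 1 or -1);
  the vertex number i (0 \<le> i \<le> n) is (i, height s i).\<close>
definition height :: "int list \<Rightarrow> nat \<Rightarrow> int" where
  "height s i = sum_list (take i s)"

definition loops :: "nat \<Rightarrow> nat \<Rightarrow> int list set" where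
  "loops n w = {s. length s = n \<and> set s \<subseteq> {1, -1} \<and> height s n = 0 \<and>
                   (\<forall>i\<le>n. 0 \<le> height s i \<and> height s i \<le> int w)}"

definition u_count :: "nat \<Rightarrow> int list \<Rightarrow> nat" where
  "u_count n s = card {i \<in> {1..n}. height s i = 0}"

definition v_count :: "nat \<Rightarrow> nat \<Rightarrow> int list \<Rightarrow> nat" where
  "v_count n w s = card {i \<in> {0..n}. height s i = int w}"

definition Zpf :: "nat \<Rightarrow> nat \<Rightarrow> real \<Rightarrow> real \<Rightarrow> real" where
  "Zpf n w a b = (\<Sum>s\<in>loops n w. a ^ u_count n s * b ^ v_count n w s)"

definition Dw :: "real \<Rightarrow> real \<Rightarrow> nat \<Rightarrow> complex \<Rightarrow> complex" where
  "Dw l m w p = (1 - (of_real l)^2 * p^2) * (1 - (of_real m)^2 * p^2)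
               - ((of_real l)^2 - p^2) * ((of_real m)^2 - p^2) * p ^ (2*w)"

definition epsk :: "real \<Rightarrow> real \<Rightarrow> complex \<Rightarrow> complex" where
  "epsk l m p = p^2 * ((of_real l)^2 / (1 - (of_real l)^2 * p^2) - 1 / ((of_real l)^2 - p^2)
                     + (of_real m)^2 / (1 - (of_real m)^2 * p^2) - 1 / ((of_real m)^2 - p^2))"

end

theory Submission
  imports Defs "HOL-Computational_Algebra.Fundamental_Theorem_Algebra"
begin

text \<open>Writing \<open>L = \<lambda>\<^sup>2\<close>, \<open>M = \<mu>\<^sup>2\<close>, the weight \<open>F\<^sub>n(h)\<close> of paths of length \<open>n\<close> ending at height \<open>h\<close> obeys
  the transfer-matrix recursion \<open>F\<^sub>n\<^sub>+\<^sub>1(h) = \<omega>\<^sub>h (F\<^sub>n(h-1) + F\<^sub>n(h+1))\<close> on \<open>0..w\<close>, where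
  \<open>\<omega>\<^sub>0 = 1 + L\<close>, \<open>\<omega>\<^sub>w = 1 + M\<close> and \<open>\<omega>\<^sub>h = 1\<close> otherwise. For every root \<open>p\<close> of \<open>D\<^sub>w\<close>,
  \<open>\<psi>\<^sub>p(h) = (M - p\<^sup>2) p\<^sup>2\<^sup>w\<^sup>-\<^sup>h + (1 - M p\<^sup>2) p\<^sup>h\<close> is an eigenvector with eigenvalue \<open>p + 1/p\<close>,
  so the sum over all roots of \<open>-(1 - p\<^sup>2) \<psi>\<^sub>p(h) (p + 1/p)\<^sup>n / (2 p D\<^sub>w'(p))\<close> obeys the same
  recursion; the residue theorem for \<open>q(p) / (p D\<^sub>w(p))\<close> shows that it also starts at
  \<open>F\<^sub>0(h) = [h = 0]\<close>. This requires \<open>D\<^sub>w\<close> to be squarefree. The roots \<open>\<plusminus>1\<close> are simple for all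
  large \<open>w\<close>; at any other root, \<open>p D\<^sub>w'(p)\<close> is a nonzero multiple of the norm of \<open>\<psi>\<^sub>p\<close> for the
  bilinear form that makes the transfer matrix symmetric, and that norm cannot vanish because
  self-adjointness forces \<open>p\<close> to be real or unimodular. Finally the terms at \<open>p = \<plusminus>1\<close>
  vanish, and the remaining coefficients are rewritten in terms of \<open>\<epsilon>\<^sub>k\<close>.\<close>

section \<open>Sums over the roots of a squarefree polynomial\<close>

lemma sum_prod_diff_remove:
  fixes R :: "'a::comm_ring_1 set"
  assumes "finite R" and "z \<in> R"
  shows "(\<Sum>a\<in>R. c a * (\<Prod>y\<in>R-{a}. z - y)) = c z * (\<Prod>y\<in>R-{z}. z - y)"
proof -
  have "(\<Sum>a\<in>R-{z}. c a * (\<Prod>y\<in>R-{a}. z - y)) = 0"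
  proof (intro sum.neutral ballI)
    fix a assume "a \<in> R - {z}"
    then have "(\<Prod>y\<in>R-{a}. z - y) = 0" using assms by (intro prod_zero) auto
    then show "c a * (\<Prod>y\<in>R-{a}. z - y) = 0" by simp
  qed
  then show ?thesis using assms by (simp add: sum.remove)
qed

lemma lagrange_power_sum:
  fixes S :: "complex set"
  assumes fin: "finite S" and k: "k < card S"
  shows "(\<Sum>z\<in>S. z^k / (\<Prod>y\<in>S-{z}. z - y)) = (if k = card S - 1 then 1 else 0)"
proof -
  define c where "c z = z^k / (\<Prod>y\<in>S-{z}. z - y)" for z
  define I where "I = (\<Sum>z\<in>S. smult (c z) (\<Prod>y\<in>S-{z}. [:-y,1:]))"
  have deg_basis: "degree (\<Prod>y\<in>S-{z}. [:-y,1:]) = card S - 1" if "z \<in> S" for z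
  proof -
    have "degree (\<Prod>y\<in>S-{z}. [:-y,1:]) = (\<Sum>y\<in>S-{z}. degree [:-y,(1::complex):])"
      by (rule degree_prod_sum_eq) auto
    then show ?thesis using that fin by simp
  qed
  have "degree I \<le> card S - 1"
    unfolding I_def
    by (rule degree_sum_le) (use fin in \<open>auto intro: order.trans[OF degree_smult_le] simp: deg_basis\<close>)
  moreover have "poly I t = t^k" if t: "t \<in> S" for t
  proof -
    have "poly I t = (\<Sum>z\<in>S. c z * (\<Prod>y\<in>S-{z}. t - y))"
      by (simp add: I_def poly_sum poly_prod)
    also have "\<dots> = c t * (\<Prod>y\<in>S-{t}. t - y)"
      using fin t by (rule sum_prod_diff_remove)
    also have "\<dots> = t^k"
      using fin by (simp add: c_def)
    finally show ?thesis .
  qed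
  ultimately have "I = monom 1 k"
    using k by (intro poly_eqI_degree[of S]) (auto simp: poly_monom degree_monom_eq)
  moreover have "coeff I (card S - 1) = (\<Sum>z\<in>S. c z)"
    unfolding I_def coeff_sum coeff_smult
  proof (intro sum.cong refl)
    fix z assume "z \<in> S"
    moreover have "lead_coeff (\<Prod>y\<in>S-{z}. [:-y,1:]) = 1"
      by (simp add: lead_coeff_prod)
    ultimately have "coeff (\<Prod>y\<in>S-{z}. [:-y,1:]) (card S - 1) = 1"
      by (simp add: deg_basis)
    then show "c z * coeff (\<Prod>y\<in>S-{z}. [:-y,1:]) (card S - 1) = c z" by simp
  qed
  ultimately show ?thesis by (simp add: c_def)
qed

lemma rsquarefree_roots_finite:
  fixes D :: "complex poly"
  shows "rsquarefree D \<Longrightarrow> finite {z. poly D z = 0}"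
  by (simp add: rsquarefree_def poly_roots_finite)

lemma rsquarefree_eq_smult_prod_roots:
  fixes D :: "complex poly"
  assumes "rsquarefree D"
  shows "D = smult (lead_coeff D) (\<Prod>z\<in>{z. poly D z = 0}. [:-z, 1:])"
  using complex_poly_decompose_rsquarefree[OF assms] by simp

lemma rsquarefree_card_roots:
  fixes D :: "complex poly"
  assumes "rsquarefree D"
  shows "card {z. poly D z = 0} = degree D"
proof -
  have "D \<noteq> 0" using assms by (simp add: rsquarefree_def)
  then have "degree D = degree (\<Prod>z\<in>{z. poly D z = 0}. [:-z, 1:])"
    by (subst rsquarefree_eq_smult_prod_roots[OF assms]) simp
  also have "\<dots> = (\<Sum>z\<in>{z. poly D z = 0}. degree [:-z, (1::complex):])"
    by (rule degree_prod_sum_eq) auto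
  finally show ?thesis by simp
qed

lemma poly_rsquarefree:
  fixes D :: "complex poly"
  assumes "rsquarefree D"
  shows "poly D x = lead_coeff D * (\<Prod>y\<in>{z. poly D z = 0}. x - y)"
  by (subst rsquarefree_eq_smult_prod_roots[OF assms]) (simp add: poly_prod)

lemma poly_pderiv_rsquarefree_root:
  fixes D :: "complex poly"
  assumes sq: "rsquarefree D" and z: "poly D z = 0"
  shows "poly (pderiv D) z = lead_coeff D * (\<Prod>y\<in>{z. poly D z = 0}-{z}. z - y)"
proof -
  let ?R = "{z. poly D z = 0}"
  have "pderiv D = smult (lead_coeff D) (\<Sum>a\<in>?R. (\<Prod>y\<in>?R-{a}. [:-y,1:]))"
    by (subst rsquarefree_eq_smult_prod_roots[OF sq])
       (simp add: pderiv_smult pderiv_prod pderiv_pCons)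
  then have "poly (pderiv D) z = lead_coeff D * (\<Sum>a\<in>?R. 1 * (\<Prod>y\<in>?R-{a}. z - y))"
    by (simp add: poly_sum poly_prod)
  also have "\<dots> = lead_coeff D * (\<Prod>y\<in>?R-{z}. z - y)"
    using sum_prod_diff_remove[of ?R z "\<lambda>_. 1"] rsquarefree_roots_finite[OF sq] z by simp
  finally show ?thesis .
qed

text \<open>Residue calculus for \<open>z\<^sup>k / (z D(z))\<close>: the residues at the roots of \<open>D\<close>, at \<open>0\<close> and
  at infinity add up to zero; it is proved through Lagrange interpolation on the roots together with \<open>0\<close>.\<close>

lemma root_sum_power_div:
  fixes D :: "complex poly"
  assumes sq: "rsquarefree D" and D0: "poly D 0 \<noteq> 0" and k: "k \<le> degree D"
  shows "(\<Sum>z | poly D z = 0. z^k / (z * poly (pderiv D) z)) =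
    (if k = degree D then 1 / lead_coeff D else 0) - (if k = 0 then 1 / poly D 0 else 0)"
proof -
  define R where "R = {z. poly D z = 0}"
  have fin: "finite R" and card: "card R = degree D" and "0 \<notin> R"
    using rsquarefree_roots_finite[OF sq] rsquarefree_card_roots[OF sq] D0 by (auto simp: R_def)
  have lc: "lead_coeff D \<noteq> 0" using sq by (simp add: rsquarefree_def)
  have prod0: "(\<Prod>y\<in>R. - y) = poly D 0 / lead_coeff D"
    using poly_rsquarefree[OF sq, of 0] lc by (simp add: R_def)
  have prodz: "(\<Prod>y\<in>insert 0 R - {z}. z - y) = z * poly (pderiv D) z / lead_coeff D"
    if "z \<in> R" for z
  proof -
    have "insert 0 R - {z} = insert 0 (R - {z})" using that \<open>0 \<notin> R\<close> by auto
    then show ?thesis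
      using that fin \<open>0 \<notin> R\<close> lc poly_pderiv_rsquarefree_root[OF sq, of z] by (simp add: R_def)
  qed
  have root_terms: "(\<Sum>z\<in>R. z^k / (\<Prod>y\<in>insert 0 R - {z}. z - y)) =
      lead_coeff D * (\<Sum>z\<in>R. z^k / (z * poly (pderiv D) z))"
    unfolding sum_distrib_left by (intro sum.cong refl) (simp add: prodz)
  have "(if k = degree D then 1 else 0) = (\<Sum>z\<in>insert 0 R. z^k / (\<Prod>y\<in>insert 0 R - {z}. z - y))"
    using lagrange_power_sum[of "insert 0 R" k] fin card \<open>0 \<notin> R\<close> k by simp
  also have "\<dots> = 0^k / (\<Prod>y\<in>R. - y) + (\<Sum>z\<in>R. z^k / (\<Prod>y\<in>insert 0 R - {z}. z - y))"
    using fin \<open>0 \<notin> R\<close> by (simp add: insert_Diff_if)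
  also have "\<dots> = (if k = 0 then lead_coeff D / poly D 0 else 0)
      + lead_coeff D * (\<Sum>z\<in>R. z^k / (z * poly (pderiv D) z))"
    by (simp add: prod0 root_terms)
  finally have "lead_coeff D * (\<Sum>z\<in>R. z^k / (z * poly (pderiv D) z)) =
      (if k = degree D then 1 else 0) - (if k = 0 then lead_coeff D / poly D 0 else 0)"
    by (simp add: algebra_simps)
  then have "(\<Sum>z\<in>R. z^k / (z * poly (pderiv D) z)) =
      ((if k = degree D then 1 else 0) - (if k = 0 then lead_coeff D / poly D 0 else 0)) / lead_coeff D"
    using lc by (simp add: nonzero_eq_divide_eq mult.commute)
  then show ?thesis using lc by (simp add: R_def diff_divide_distrib)
qed

lemma poly_eq_sum_coeffs:
  fixes q :: "'a::comm_semiring_1 poly"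
  assumes "degree q \<le> N"
  shows "poly q x = (\<Sum>k\<le>N. coeff q k * x^k)"
  unfolding poly_altdef using assms
  by (intro sum.mono_neutral_left) (auto simp: coeff_eq_0)

lemma root_sum_poly_div:
  fixes D q :: "complex poly"
  assumes sq: "rsquarefree D" and D0: "poly D 0 \<noteq> 0" and q: "degree q \<le> degree D"
  shows "(\<Sum>z | poly D z = 0. poly q z / (z * poly (pderiv D) z)) =
    coeff q (degree D) / lead_coeff D - poly q 0 / poly D 0"
proof -
  have "(\<Sum>z | poly D z = 0. poly q z / (z * poly (pderiv D) z)) =
      (\<Sum>k\<le>degree D. coeff q k * (\<Sum>z | poly D z = 0. z^k / (z * poly (pderiv D) z)))"
    by (simp add: poly_eq_sum_coeffs[OF q] sum_divide_distrib sum_distrib_left sum.swap[of _ _ "{..degree D}"])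
  also have "\<dots> = (\<Sum>k\<le>degree D. (if k = degree D then coeff q k / lead_coeff D else 0)
      - (if k = 0 then coeff q k / poly D 0 else 0))"
    by (intro sum.cong refl) (simp add: root_sum_power_div[OF sq D0] right_diff_distrib)
  also have "\<dots> = coeff q (degree D) / lead_coeff D - coeff q 0 / poly D 0"
    by (simp add: right_diff_distrib sum_subtractf)
  finally show ?thesis by (simp add: poly_0_coeff_0)
qed

section \<open>The polynomial \<open>D\<^sub>w\<close> and the eigenvectors of the transfer matrix\<close>

definition D_poly :: "complex \<Rightarrow> complex \<Rightarrow> nat \<Rightarrow> complex poly" where
  "D_poly L M w = [:1, 0, -(L+M), 0, L*M:] - monom 1 (2*w) * [:L*M, 0, -(L+M), 0, 1:]"

lemma poly_D_poly:
  "poly (D_poly L M w) p = (1 - L*p^2) * (1 - M*p^2) - (L - p^2) * (M - p^2) * p^(2*w)"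
  by (simp add: D_poly_def poly_monom algebra_simps power2_eq_square)

lemma Dw_eq_poly_D_poly: "Dw l m w p = poly (D_poly ((of_real l)^2) ((of_real m)^2) w) p"
  by (simp add: Dw_def poly_D_poly)

lemma poly_D_poly_0: "w \<ge> 1 \<Longrightarrow> poly (D_poly L M w) 0 = 1"
  by (simp add: poly_D_poly)

lemma D_poly_root_nonzero: "w \<ge> 1 \<Longrightarrow> poly (D_poly L M w) p = 0 \<Longrightarrow> p \<noteq> 0"
  using poly_D_poly_0 by force

lemma D_poly_swap: "poly (D_poly L M w) p = poly (D_poly M L w) p"
  by (simp add: poly_D_poly algebra_simps)

lemma
  assumes "w \<ge> 1"
  shows degree_D_poly: "degree (D_poly L M w) = 2*w + 4"
    and lead_coeff_D_poly: "lead_coeff (D_poly L M w) = -1"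
proof -
  define q where "q = monom 1 (2*w) * [:L*M, 0, -(L+M), 0, 1:]"
  have q: "degree q = 2*w + 4" "lead_coeff q = 1"
    unfolding q_def by (subst degree_mult_eq; simp add: degree_monom_eq lead_coeff_mult)+
  have less: "degree [:1, 0, -(L+M), 0, L*M:] < degree (- q)"
    using q assms by (auto intro: le_less_trans[OF degree_pCons_le] simp: degree_pCons_le)
  have D: "D_poly L M w = [:1, 0, -(L+M), 0, L*M:] + - q"
    by (simp add: D_poly_def q_def)
  show "degree (D_poly L M w) = 2*w + 4"
    unfolding D degree_add_eq_right[OF less] using q by simp
  have "lead_coeff (D_poly L M w) = lead_coeff (- q)"
    unfolding D by (rule lead_coeff_add_le[OF less])
  then show "lead_coeff (D_poly L M w) = -1"
    using q by (simp add: lead_coeff_minus)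
qed

lemma p_mult_pderiv_D_poly:
  assumes "w \<ge> 1"
  shows "p * poly (pderiv (D_poly L M w)) p =
    - 2*L*p^2*(1 - M*p^2) - 2*M*p^2*(1 - L*p^2) + 2*p^2*(L + M - 2*p^2)*p^(2*w)
    - 2*of_nat w*(L - p^2)*(M - p^2)*p^(2*w)"
proof -
  define q where "q = p^(2*w - 1)"
  have pw: "p^(2*w) = p * q"
    using assms by (simp add: q_def flip: power_Suc)
  have "DERIV (poly (D_poly L M w)) p :> poly (pderiv (D_poly L M w)) p"
    by (rule poly_DERIV)
  moreover have "DERIV (poly (D_poly L M w)) p :> - 2*L*p*(1 - M*p^2) - 2*M*p*(1 - L*p^2)
      + 2*p*(L + M - 2*p^2)*p^(2*w) - of_nat (2*w)*(L - p^2)*(M - p^2)*p^(2*w - 1)"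
    unfolding poly_D_poly[abs_def]
    by (rule derivative_eq_intros refl | simp add: algebra_simps power2_eq_square)+
  ultimately have D': "poly (pderiv (D_poly L M w)) p = - 2*L*p*(1 - M*p^2) - 2*M*p*(1 - L*p^2)
      + 2*p*(L + M - 2*p^2)*p^(2*w) - of_nat (2*w)*(L - p^2)*(M - p^2)*p^(2*w - 1)"
    by (rule DERIV_unique)
  show ?thesis
    unfolding D' q_def[symmetric] pw by (simp add: algebra_simps power2_eq_square)
qed

definition weight :: "complex \<Rightarrow> complex \<Rightarrow> nat \<Rightarrow> nat \<Rightarrow> complex" where
  "weight L M w h = (if h = 0 then 1 + L else if h = w then 1 + M else 1)"

definition neighbour_sum :: "nat \<Rightarrow> (nat \<Rightarrow> 'a::comm_monoid_add) \<Rightarrow> nat \<Rightarrow> 'a" where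
  "neighbour_sum w v h = (if 0 < h then v (h - 1) else 0) + (if h < w then v (h + 1) else 0)"

text \<open>\<open>eigvec\<close> combines the plane waves \<open>p\<^sup>h\<close> and \<open>p\<^sup>-\<^sup>h\<close> so that the boundary equation at height
  \<open>w\<close> holds identically; the boundary equation at height \<open>0\<close> is exactly \<open>D\<^sub>w(p) = 0\<close>.\<close>

definition eigvec :: "complex \<Rightarrow> nat \<Rightarrow> complex \<Rightarrow> nat \<Rightarrow> complex" where
  "eigvec M w p h = (M - p^2) * p^(2*w - h) + (1 - M*p^2) * p^h"

lemma eigvec_0: "eigvec M w p 0 = (M - p^2) * p^(2*w) + (1 - M*p^2)"
  by (simp add: eigvec_def)

lemma eigvec_w: "eigvec M w p w = (1 + M) * (1 - p^2) * p^w"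
  by (simp add: eigvec_def algebra_simps mult_2)

lemma eigvec_interior:
  assumes "0 < h" and "h < w"
  shows "(1 + p^2) * eigvec M w p h = p * (eigvec M w p (h - 1) + eigvec M w p (h + 1))"
proof -
  obtain k j where "h = Suc k" and "2*w - h = Suc j"
    using assms by (metis Suc_diff_Suc gr0_conv_Suc less_imp_le_nat mult_2 trans_less_add1)
  moreover from this have "2*w - (h - 1) = Suc (Suc j)" and "2*w - (h + 1) = j"
    using assms by auto
  ultimately show ?thesis
    by (simp add: eigvec_def algebra_simps power2_eq_square)
qed

lemma eigvec_top:
  assumes "0 < w"
  shows "(1 + p^2) * eigvec M w p w = p * ((1 + M) * eigvec M w p (w - 1))"
proof -
  obtain k where "w = Suc k" using assms by (cases w) auto
  moreover from this have "2*w - w = Suc k" and "2*w - (w - 1) = Suc (Suc k)" by auto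
  ultimately show ?thesis
    by (simp add: eigvec_def algebra_simps power2_eq_square)
qed

lemma eigvec_bottom:
  assumes D: "poly (D_poly L M w) p = 0" and "0 < w"
  shows "(1 + p^2) * eigvec M w p 0 = p * ((1 + L) * eigvec M w p 1)"
proof -
  define q where "q = p^(2*w - 1)"
  have pw: "p^(2*w) = p * q"
    using assms by (simp add: q_def flip: power_Suc)
  have "(1 - L*p^2) * (1 - M*p^2) = (L - p^2) * (M - p^2) * (p * q)"
    using D by (simp add: poly_D_poly pw)
  then show ?thesis
    unfolding eigvec_def diff_zero power_0 power_one_right q_def[symmetric] pw by algebra
qed

lemma eigvec_eigen:
  assumes D: "poly (D_poly L M w) p = 0" and w: "w \<ge> 1" and h: "h \<le> w"
  shows "(1 + p^2) / p * eigvec M w p h = weight L M w h * neighbour_sum w (eigvec M w p) h"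
proof -
  have "p \<noteq> 0" using D_poly_root_nonzero[OF w D] .
  moreover have "(1 + p^2) * eigvec M w p h = p * (weight L M w h * neighbour_sum w (eigvec M w p) h)"
    using eigvec_bottom[OF D] eigvec_top[of w] eigvec_interior[of h w] w h
    by (cases "h = 0"; cases "h = w") (auto simp: weight_def neighbour_sum_def)
  ultimately show ?thesis by (simp add: field_simps)
qed

text \<open>The candidate for the path weights: an expansion in the eigenvectors, with coefficients
  chosen to match the initial condition.\<close>

definition spectral_sum :: "complex \<Rightarrow> complex \<Rightarrow> nat \<Rightarrow> nat \<Rightarrow> nat \<Rightarrow> complex" where
  "spectral_sum L M w n h = (\<Sum>p | poly (D_poly L M w) p = 0.
     - (1/2) * (1 - p^2) * eigvec M w p h * ((1 + p^2) / p)^n / (p * poly (pderiv (D_poly L M w)) p))"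

lemma spectral_sum_Suc:
  assumes w: "w \<ge> 1" and h: "h \<le> w"
  shows "spectral_sum L M w (Suc n) h = weight L M w h * neighbour_sum w (spectral_sum L M w n) h"
proof -
  let ?R = "{p. poly (D_poly L M w) p = 0}"
  define c where "c p = - (1/2) * (1 - p^2) * ((1 + p^2) / p)^n / (p * poly (pderiv (D_poly L M w)) p)"
    for p
  have unfold: "spectral_sum L M w n = (\<lambda>h. \<Sum>p\<in>?R. c p * eigvec M w p h)"
    by (rule ext) (auto simp: spectral_sum_def c_def intro!: sum.cong)
  have "spectral_sum L M w (Suc n) h = (\<Sum>p\<in>?R. c p * ((1 + p^2) / p * eigvec M w p h))"
    by (auto simp: spectral_sum_def c_def mult_ac intro!: sum.cong)
  also have "\<dots> = (\<Sum>p\<in>?R. c p * (weight L M w h * neighbour_sum w (eigvec M w p) h))"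
    using eigvec_eigen[OF _ w h] by (intro sum.cong) auto
  also have "\<dots> = weight L M w h * neighbour_sum w (spectral_sum L M w n) h"
    unfolding unfold
    by (cases "0 < h"; cases "h < w")
       (simp_all add: neighbour_sum_def sum_distrib_left sum.distrib algebra_simps)
  finally show ?thesis .
qed

lemma spectral_sum_0:
  assumes sq: "rsquarefree (D_poly L M w)" and w: "w \<ge> 1" and h: "h \<le> w"
  shows "spectral_sum L M w 0 h = (if h = 0 then 1 else 0)"
proof -
  define N where "N = monom M (2*w - h) - monom (1 + M) (2*w - h + 2) + monom 1 (2*w - h + 4)
    + monom 1 h - monom (1 + M) (h + 2) + monom M (h + 4)"
  have poly_N: "poly N p = (1 - p^2) * eigvec M w p h" for p
    by (simp add: N_def poly_monom eigvec_def algebra_simps power_add power2_eq_square eval_nat_numeral)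
  have "degree N \<le> 2*w + 4"
    unfolding N_def using h
    by (intro degree_add_le degree_diff_le order.trans[OF degree_monom_le]) auto
  then have deg: "degree N \<le> degree (D_poly L M w)"
    using w by (simp add: degree_D_poly)
  have coeff_N: "coeff N (2*w + 4) = (if h = 0 then 1 else 0)"
    using w h by (simp add: N_def) arith
  have N0: "poly N 0 = (if h = 0 then 1 else 0)"
    using w h by (simp add: poly_N eigvec_def power_0_left)
  have "spectral_sum L M w 0 h =
      - (1/2) * (\<Sum>p | poly (D_poly L M w) p = 0. poly N p / (p * poly (pderiv (D_poly L M w)) p))"
    by (simp add: spectral_sum_def poly_N sum_distrib_left)
  also have "\<dots> = - (1/2) * (coeff N (2*w + 4) / (-1) - poly N 0 / 1)"
    using root_sum_poly_div[OF sq _ deg] lead_coeff_D_poly[OF w] w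
    by (simp add: poly_D_poly_0 degree_D_poly)
  finally show ?thesis by (simp add: coeff_N N0)
qed

section \<open>\<open>D\<^sub>w\<close> is squarefree for large \<open>w\<close>\<close>

definition eig_norm :: "complex \<Rightarrow> complex \<Rightarrow> nat \<Rightarrow> complex \<Rightarrow> complex" where
  "eig_norm L M w p = (\<Sum>h\<le>w. (eigvec M w p h)^2 / weight L M w h)"

lemma sum_eigvec_sq:
  "(\<Sum>h\<le>w. (eigvec M w p h)^2) = ((M - p^2)^2 * p^(2*w) + (1 - M*p^2)^2) * (\<Sum>h\<le>w. (p^2)^h)
     + 2 * (of_nat w + 1) * (M - p^2) * (1 - M*p^2) * p^(2*w)"
proof -
  have sq: "(eigvec M w p h)^2 = (M - p^2)^2 * p^(2*w) * (p^2)^(w - h)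
      + 2 * (M - p^2) * (1 - M*p^2) * p^(2*w) + (1 - M*p^2)^2 * (p^2)^h" if "h \<le> w" for h
  proof -
    have "(p^(2*w - h))^2 = p^(2*w) * (p^2)^(w - h)" and "p^(2*w - h) * p^h = p^(2*w)"
      using that by (simp_all flip: power_mult power_add) (simp_all add: algebra_simps)
    then show ?thesis
      by (simp add: eigvec_def power2_eq_square algebra_simps power_mult_distrib flip: power_mult)
  qed
  have rev: "(\<Sum>h\<le>w. (p^2)^(w - h)) = (\<Sum>h\<le>w. (p^2)^h)"
    using sum.atLeastAtMost_rev[of "\<lambda>h. (p^2)^h" 0 w] by (simp add: atLeast0AtMost)
  have "(\<Sum>h\<le>w. (eigvec M w p h)^2) = (\<Sum>h\<le>w. (M - p^2)^2 * p^(2*w) * (p^2)^(w - h)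
      + 2 * (M - p^2) * (1 - M*p^2) * p^(2*w) + (1 - M*p^2)^2 * (p^2)^h)"
    by (intro sum.cong refl) (simp add: sq)
  also have "\<dots> = (M - p^2)^2 * p^(2*w) * (\<Sum>h\<le>w. (p^2)^h)
      + (of_nat w + 1) * (2 * (M - p^2) * (1 - M*p^2) * p^(2*w)) + (1 - M*p^2)^2 * (\<Sum>h\<le>w. (p^2)^h)"
    by (simp only: sum.distrib sum_distrib_left[symmetric] rev sum_constant card_atMost)
       (simp add: algebra_simps)
  finally show ?thesis by (simp add: algebra_simps)
qed

lemma eig_norm_split:
  assumes w: "w \<ge> 1" and L: "1 + L \<noteq> 0" and M: "1 + M \<noteq> 0"
  shows "(1 + L) * (1 + M) * eig_norm L M w p = (1 + L) * (1 + M) * (\<Sum>h\<le>w. (eigvec M w p h)^2)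
    - L * (1 + M) * (eigvec M w p 0)^2 - M * (1 + L) * (eigvec M w p w)^2"
proof -
  define f where "f h = (eigvec M w p h)^2" for h
  have "f h / weight L M w h = f h - ((if h = 0 then L / (1 + L) * f 0 else 0)
      + (if h = w then M / (1 + M) * f w else 0))" for h
    using w L M by (auto simp: weight_def field_simps)
  then have eq: "eig_norm L M w p = (\<Sum>h\<le>w. f h) - L / (1 + L) * f 0 - M / (1 + M) * f w"
    by (simp add: eig_norm_def f_def[symmetric] sum_subtractf sum.distrib)
  have ring:  "(1 + L) * (1 + M) * (S - a * f 0 - b * f w) =
      (1 + L) * (1 + M) * S - (1 + M) * ((1 + L) * a) * f 0 - (1 + L) * ((1 + M) * b) * f w" for S a b
    by (simp add: algebra_simps)
  have "(1 + L) * (1 + M) * eig_norm L M w p = (1 + L) * (1 + M) * (\<Sum>h\<le>w. f h)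
      - (1 + M) * ((1 + L) * (L / (1 + L))) * f 0 - (1 + L) * ((1 + M) * (M / (1 + M))) * f w"
    unfolding eq by (rule ring)
  then show ?thesis
    using L M by (simp add: f_def)
qed

lemma eig_norm_closed_form:
  assumes w: "w \<ge> 1" and L: "1 + L \<noteq> 0" and M: "1 + M \<noteq> 0"
  shows "(1 + L) * (1 + M) * eig_norm L M w p =
    (1 + L) * (1 + M) * (((M - p^2)^2 * p^(2*w) + (1 - M*p^2)^2) * (\<Sum>h\<le>w. (p^2)^h)
      + 2 * (of_nat w + 1) * (M - p^2) * (1 - M*p^2) * p^(2*w))
    - L * (1 + M) * ((M - p^2) * p^(2*w) + (1 - M*p^2))^2
    - M * (1 + L) * ((1 + M) * (1 - p^2))^2 * p^(2*w)"
proof -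
  have "(eigvec M w p w)^2 = ((1 + M) * (1 - p^2))^2 * p^(2*w)"
    by (simp add: eigvec_w power_mult_distrib power_even_eq)
  then show ?thesis
    unfolding eig_norm_split[OF w L M] sum_eigvec_sq eigvec_0 by simp
qed

text \<open>The transfer matrix is symmetric for the bilinear form with weights \<open>1 / weight\<close>; this
  identity expresses the norm of the eigenvector in that form through \<open>D'(p)\<close>.\<close>

lemma eig_norm_identity:
  assumes D: "poly (D_poly L M w) p = 0" and P: "p^2 \<noteq> 1" and w: "w \<ge> 1"
    and L: "1 + L \<noteq> 0" and M: "1 + M \<noteq> 0"
  shows "(L - p^2) * eig_norm L M w p = - (1 - M*p^2) * (p * poly (pderiv (D_poly L M w)) p)"
proof -
  define P Q G W where "P = p^2" and "Q = p^(2*w)" and "G = (\<Sum>h\<le>w. (p^2)^h)"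
    and "W = (of_nat w :: complex)"
  have root: "(1 - L*P) * (1 - M*P) = (L - P) * (M - P) * Q"
    using D by (simp add: poly_D_poly P_def Q_def)
  have geom: "(P - 1) * G = P * Q - 1"
  proof -
    have "(1 - P) * G = 1 - P^Suc w"
      unfolding G_def P_def by (rule sum_gp_basic)
    also have "P^Suc w = P * Q"
      by (simp add: P_def Q_def power_mult)
    finally show ?thesis by (simp add: algebra_simps)
  qed
  have pD': "p * poly (pderiv (D_poly L M w)) p = - 2*L*P*(1 - M*P) - 2*M*P*(1 - L*P)
      + 2*P*(L + M - 2*P)*Q - 2*W*(L - P)*(M - P)*Q"
    unfolding P_def Q_def W_def by (rule p_mult_pderiv_D_poly[OF w])
  have N: "(1 + L) * (1 + M) * eig_norm L M w p = (1 + L) * (1 + M) * (((M - P)^2 * Q + (1 - M*P)^2) * G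
      + 2 * (W + 1) * (M - P) * (1 - M*P) * Q)
      - L * (1 + M) * ((M - P) * Q + (1 - M*P))^2 - M * (1 + L) * ((1 + M) * (1 - P))^2 * Q"
    unfolding P_def Q_def G_def W_def by (rule eig_norm_closed_form[OF w L M])
  have "(P - 1) * ((L - P) * ((1 + L) * (1 + M) * (((M - P)^2 * Q + (1 - M*P)^2) * G
      + 2 * (W + 1) * (M - P) * (1 - M*P) * Q)
      - L * (1 + M) * ((M - P) * Q + (1 - M*P))^2 - M * (1 + L) * ((1 + M) * (1 - P))^2 * Q)
    + (1 + L) * (1 + M) * (1 - M*P) * (- 2*L*P*(1 - M*P) - 2*M*P*(1 - L*P)
      + 2*P*(L + M - 2*P)*Q - 2*W*(L - P)*(M - P)*Q)) = 0"
    using root geom by algebra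
  moreover have "P - 1 \<noteq> 0" using P by (simp add: P_def)
  ultimately have "(L - P) * ((1 + L) * (1 + M) * eig_norm L M w p)
      + (1 + L) * (1 + M) * (1 - M*P) * (p * poly (pderiv (D_poly L M w)) p) = 0"
    unfolding N pD' by simp
  then have "(1 + L) * (1 + M) * ((L - P) * eig_norm L M w p
      + (1 - M*P) * (p * poly (pderiv (D_poly L M w)) p)) = 0"
    by (simp add: algebra_simps)
  then have "(L - P) * eig_norm L M w p + (1 - M*P) * (p * poly (pderiv (D_poly L M w)) p) = 0"
    using L M by simp
  then show ?thesis
    by (simp only: P_def mult_minus_left eq_neg_iff_add_eq_0)
qed

lemma weight_of_real:
  "weight (of_real L) (of_real M) w h = of_real (if h = 0 then 1 + L else if h = w then 1 + M else 1)"
  by (simp add: weight_def)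

lemma Im_neighbour_form: "Im (\<Sum>h\<le>w. cnj (v h) * neighbour_sum w v h) = 0"
proof (cases w)
  case 0
  then show ?thesis by (simp add: neighbour_sum_def)
next
  case (Suc k)
  have "(\<Sum>h\<le>w. cnj (v h) * neighbour_sum w v h)
      = (\<Sum>h\<le>w. if 0 < h then cnj (v h) * v (h - 1) else 0) + (\<Sum>h\<le>w. if h < w then cnj (v h) * v (h + 1) else 0)"
    unfolding sum.distrib[symmetric] by (intro sum.cong refl) (simp add: neighbour_sum_def distrib_left)
  also have "(\<Sum>h\<le>w. if 0 < h then cnj (v h) * v (h - 1) else 0) = (\<Sum>h\<le>k. cnj (v (Suc h)) * v h)"
    unfolding Suc sum.atMost_Suc_shift by simp
  also have "(\<Sum>h\<le>w. if h < w then cnj (v h) * v (h + 1) else 0) = (\<Sum>h\<le>k. cnj (v h) * v (Suc h))"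
    unfolding Suc sum.atMost_Suc by simp
  also have "(\<Sum>h\<le>k. cnj (v (Suc h)) * v h) + (\<Sum>h\<le>k. cnj (v h) * v (Suc h))
      = (\<Sum>h\<le>k. cnj (v (Suc h)) * v h + cnj (cnj (v (Suc h)) * v h))"
    by (simp add: sum.distrib mult.commute)
  finally show ?thesis by (simp add: Im_sum)
qed

lemma weighted_norm_pos:
  fixes v :: "nat \<Rightarrow> complex"
  assumes "v w \<noteq> 0" and "\<And>h. r h > 0"
  shows "(\<Sum>h\<le>w. (cmod (v h))^2 / r h) > 0"
proof -
  have "(cmod (v w))^2 / r w > 0" using assms by simp
  also have "(cmod (v w))^2 / r w \<le> (\<Sum>h\<le>w. (cmod (v h))^2 / r h)"
    using assms(2) by (intro member_le_sum) (auto intro: divide_nonneg_pos)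
  finally show ?thesis .
qed

lemma one_plus_of_real_nonzero: "x \<ge> 0 \<Longrightarrow> 1 + complex_of_real x \<noteq> 0"
  by (metis of_real_1 of_real_add of_real_eq_0_iff add_nonneg_eq_0_iff zero_le_one one_neq_zero)

lemma eigvec_w_nonzero:
  fixes M :: real
  assumes "M \<ge> 0" and "p \<noteq> 0" and "p^2 \<noteq> 1"
  shows "eigvec (of_real M) w p w \<noteq> 0"
  using assms one_plus_of_real_nonzero[of M] by (simp add: eigvec_w)

text \<open>Self-adjointness of the transfer matrix: pairing its eigenvalue equation with the conjugate
  eigenvector gives a real number, so the eigenvalue \<open>p + 1/p\<close> is real.\<close>

lemma D_poly_root_real_or_unimodular:
  fixes L M :: real
  assumes D: "poly (D_poly (of_real L) (of_real M) w) p = 0" and P: "p^2 \<noteq> 1" and w: "w \<ge> 1"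
    and L: "L \<ge> 0" and M: "M \<ge> 0"
  shows "Im p = 0 \<or> cmod p = 1"
proof -
  define r where "r h = (if h = 0 then 1 + L else if h = w then 1 + M else 1)" for h
  define v where "v = eigvec (of_real M) w p"
  define S where "S = (\<Sum>h\<le>w. (cmod (v h))^2 / r h)"
  define x where "x = (1 + p^2) / p"
  have p: "p \<noteq> 0" using D_poly_root_nonzero[OF w D] .
  have r: "r h > 0" for h using L M by (simp add: r_def)
  have "S > 0"
    unfolding S_def using eigvec_w_nonzero[OF M p P] r by (intro weighted_norm_pos) (auto simp: v_def)
  have "cnj (v h) * neighbour_sum w v h = x * of_real ((cmod (v h))^2 / r h)" if "h \<le> w" for h
  proof -
    have "x * v h = of_real (r h) * neighbour_sum w v h"
      using eigvec_eigen[OF D w that] by (simp add: x_def v_def weight_of_real r_def)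
    then have "cnj (v h) * neighbour_sum w v h = x * (v h * cnj (v h)) / of_real (r h)"
      using r[of h] by (simp add: field_simps)
    then show ?thesis
      by (simp flip: complex_norm_square)
  qed
  then have "(\<Sum>h\<le>w. cnj (v h) * neighbour_sum w v h) = x * of_real S"
    by (simp add: S_def sum_distrib_left)
  then have "Im x = 0"
    using Im_neighbour_form[of v w] \<open>S > 0\<close> by simp
  moreover have "Im x = Im p * (1 - 1 / (cmod p)^2)"
    by (simp add: x_def add_divide_distrib power2_eq_square Im_divide' algebra_simps)
  ultimately have "Im p = 0 \<or> (cmod p)^2 = 1"
    using p by simp
  then show ?thesis
    using norm_ge_zero[of p] by (auto simp: power2_eq_1_iff)
qed

lemma eigvec_real:
  fixes M :: real
  assumes "Im p = 0"
  shows "(eigvec (of_real M) w p h)^2 = of_real ((cmod (eigvec (of_real M) w p h))^2)"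
proof -
  have "p = of_real (Re p)" using assms by (simp add: complex_eq_iff)
  then have "eigvec (of_real M) w p h = of_real (Re (eigvec (of_real M) w p h))"
    by (subst (1 2) \<open>p = of_real (Re p)\<close>) (simp add: eigvec_def complex_eq_iff)
  then show ?thesis
    by (metis norm_of_real of_real_power power2_abs)
qed

text \<open>On the unit circle \<open>cnj p = 1/p\<close>, and the eigenvector is reflected into itself:
  \<open>p\<^sup>2\<^sup>w\<^sup>+\<^sup>2 \<cdot> cnj \<psi> = -\<psi>\<close>.\<close>

lemma eigvec_unimodular:
  fixes M :: real
  assumes "cmod p = 1" and "h \<le> w"
  shows "(eigvec (of_real M) w p h)^2 = - (p^(2*w + 2)) * of_real ((cmod (eigvec (of_real M) w p h))^2)"
proof -
  define v where "v = eigvec (of_real M) w p h"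
  have "p \<noteq> 0" using assms(1) by auto
  have cnj_p: "cnj p = 1 / p"
    using complex_norm_square[of p] assms(1) \<open>p \<noteq> 0\<close> by (simp add: field_simps)
  define a b where "a = p^(2*w - h)" and "b = p^h"
  have ab: "p^(2*w + 2) = p^2 * a * b"
    using assms(2) by (simp add: a_def b_def flip: power_add)
  have "a \<noteq> 0" "b \<noteq> 0" using \<open>p \<noteq> 0\<close> by (simp_all add: a_def b_def)
  have cnj_v: "cnj v = (of_real M - 1 / p^2) / a + (1 - of_real M / p^2) / b"
    by (simp add: v_def eigvec_def a_def b_def cnj_p power_one_over divide_simps)
  have v: "v = (of_real M - p^2) * a + (1 - of_real M * p^2) * b"
    by (simp add: v_def eigvec_def a_def b_def)
  have "p^(2*w + 2) * cnj v = - ((of_real M - p^2) * a + (1 - of_real M * p^2) * b)"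
    unfolding ab cnj_v using \<open>a \<noteq> 0\<close> \<open>b \<noteq> 0\<close> \<open>p \<noteq> 0\<close> by (simp add: field_simps)
  then have reflect: "p^(2*w + 2) * cnj v = - v"
    by (simp only: v[symmetric])
  have "v^2 = - (p^(2*w + 2) * cnj v) * v"
    unfolding reflect by (simp add: power2_eq_square)
  then show ?thesis
    unfolding v_def[symmetric] complex_norm_square by (simp add: algebra_simps)
qed

lemma eig_norm_nonzero:
  fixes L M :: real
  assumes D: "poly (D_poly (of_real L) (of_real M) w) p = 0" and P: "p^2 \<noteq> 1" and w: "w \<ge> 1"
    and L: "L \<ge> 0" and M: "M \<ge> 0"
  shows "eig_norm (of_real L) (of_real M) w p \<noteq> 0"
proof -
  define r where "r h = (if h = 0 then 1 + L else if h = w then 1 + M else 1)" for h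
  define v where "v = eigvec (of_real M) w p"
  define S where "S = (\<Sum>h\<le>w. (cmod (v h))^2 / r h)"
  have p: "p \<noteq> 0" using D_poly_root_nonzero[OF w D] .
  have r: "r h > 0" for h using L M by (simp add: r_def)
  have "S > 0"
    unfolding S_def using eigvec_w_nonzero[OF M p P] r by (intro weighted_norm_pos) (auto simp: v_def)
  obtain c where "c \<noteq> 0" and c: "\<And>h. h \<le> w \<Longrightarrow> (v h)^2 = c * of_real ((cmod (v h))^2)"
    using D_poly_root_real_or_unimodular[OF D P w L M] p
    by (metis eigvec_real eigvec_unimodular v_def mult_1 neg_equal_0_iff_equal power_not_zero one_neq_zero)
  have "eig_norm (of_real L) (of_real M) w p = c * of_real S"
    unfolding eig_norm_def S_def sum_distrib_left of_real_sum
    by (intro sum.cong refl) (simp add: v_def[symmetric] c weight_of_real r_def[symmetric])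
  then show ?thesis using \<open>c \<noteq> 0\<close> \<open>S > 0\<close> by simp
qed

lemma
  fixes L M :: real
  assumes D: "poly (D_poly (of_real L) (of_real M) w) p = 0" and P: "p^2 \<noteq> 1" and w: "w \<ge> 1"
    and L: "L \<ge> 0" and LM: "L * M \<noteq> 1"
  shows D_poly_root_ne_L: "of_real L - p^2 \<noteq> 0"
    and D_poly_root_ne_inv_L: "1 - of_real L * p^2 \<noteq> 0"
proof -
  show LP: "of_real L - p^2 \<noteq> 0"
  proof
    assume "of_real L - p^2 = 0"
    then have "complex_of_real ((1 - L*L) * (1 - L*M)) = 0"
      using D by (simp add: poly_D_poly mult.commute flip: eq_iff_diff_eq_0)
    then have "(1 - L*L) * (1 - L*M) = 0" by (simp only: of_real_eq_0_iff)
    then have "L * L = 1" using LM by simp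
    then have "L = 1" using L power2_eq_1_iff[of L] by (auto simp: power2_eq_square)
    with \<open>of_real L - p^2 = 0\<close> P show False by simp
  qed
  show "1 - of_real L * p^2 \<noteq> 0"
  proof
    assume Lp: "1 - of_real L * p^2 = 0"
    then have "(of_real L - p^2) * (of_real M - p^2) * p^(2*w) = 0"
      using D by (simp add: poly_D_poly)
    then have "p^2 = of_real M"
      using LP D_poly_root_nonzero[OF w D] by simp
    then have "complex_of_real (1 - L * M) = 0" using Lp by simp
    with LM show False by (simp only: of_real_eq_0_iff)
  qed
qed

lemma pderiv_D_poly_root_nonzero:
  fixes L M :: real
  assumes D: "poly (D_poly (of_real L) (of_real M) w) p = 0" and P: "p^2 \<noteq> 1" and w: "w \<ge> 1"
    and L: "L \<ge> 0" and M: "M \<ge> 0" and LM: "L * M \<noteq> 1"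
  shows "poly (pderiv (D_poly (of_real L) (of_real M) w)) p \<noteq> 0"
proof
  assume "poly (pderiv (D_poly (of_real L) (of_real M) w)) p = 0"
  then have "(of_real L - p^2) * eig_norm (of_real L) (of_real M) w p = 0"
    using eig_norm_identity[OF D P w one_plus_of_real_nonzero[OF L] one_plus_of_real_nonzero[OF M]]
    by simp
  then show False
    using D_poly_root_ne_L[OF D P w L LM] eig_norm_nonzero[OF D P w L M] by simp
qed

lemma rsquarefree_D_poly:
  fixes L M :: real
  assumes L: "L \<ge> 0" and M: "M \<ge> 0" and LM: "L * M \<noteq> 1" and w: "w \<ge> 1"
    and not_critical: "real w * (L - 1) * (M - 1) \<noteq> 2 * (L * M - 1)"
  shows "rsquarefree (D_poly (of_real L) (of_real M) w)"
  unfolding rsquarefree_roots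
proof (intro allI notI)
  fix p
  assume "poly (D_poly (of_real L) (of_real M) w) p = 0 \<and> poly (pderiv (D_poly (of_real L) (of_real M) w)) p = 0"
  then have D: "poly (D_poly (of_real L) (of_real M) w) p = 0"
    and D': "poly (pderiv (D_poly (of_real L) (of_real M) w)) p = 0" by auto
  show False
  proof (cases "p^2 = 1")
    case True
    then have "p^(2*w) = 1" by (simp add: power_mult)
    then have "p * poly (pderiv (D_poly (of_real L) (of_real M) w)) p
        = of_real (4 * L * M - 4 - 2 * real w * (L - 1) * (M - 1))"
      unfolding p_mult_pderiv_D_poly[OF w] \<open>p^(2*w) = 1\<close> True by (simp add: algebra_simps)
    moreover have "4 * L * M - 4 - 2 * real w * (L - 1) * (M - 1) \<noteq> 0"
      using not_critical by (simp add: algebra_simps)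
    ultimately have "p * poly (pderiv (D_poly (of_real L) (of_real M) w)) p \<noteq> 0"
      by (metis of_real_eq_0_iff)
    then show False using D' by simp
  next
    case False
    then show False using pderiv_D_poly_root_nonzero[OF D False w L M LM] D' by simp
  qed
qed

lemma eventually_real_mult_ne:
  fixes c d :: real
  assumes "d \<noteq> 0"
  shows "eventually (\<lambda>w. real w * c \<noteq> d) sequentially"
proof (cases "c = 0")
  case True
  then show ?thesis using assms by simp
next
  case False
  obtain N :: nat where N: "real N > d / c" using reals_Archimedean2 by blast
  have "real w * c \<noteq> d" if "w \<ge> N" for w
  proof
    assume "real w * c = d"
    then have "real w = d / c" using False by (simp add: field_simps)
    with N that show False by simp
  qed
  then show ?thesis by (auto simp: eventually_sequentially)
qed

lemma eventually_rsquarefree_D_poly: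
  fixes L M :: real
  assumes L: "L \<ge> 0" and M: "M \<ge> 0" and LM: "L * M \<noteq> 1"
  shows "eventually (\<lambda>w. rsquarefree (D_poly (of_real L) (of_real M) w)) sequentially"
proof -
  have "eventually (\<lambda>w. real w * ((L - 1) * (M - 1)) \<noteq> 2 * (L * M - 1)) sequentially"
    using LM by (intro eventually_real_mult_ne) simp
  moreover have "eventually (\<lambda>w. w \<ge> 1) sequentially"
    by (rule eventually_ge_at_top)
  ultimately show ?thesis
    by eventually_elim (use L M LM in \<open>auto intro!: rsquarefree_D_poly simp: mult.assoc\<close>)
qed

section \<open>Weighted paths in the slit\<close>

definition slit_paths :: "nat \<Rightarrow> nat \<Rightarrow> int \<Rightarrow> int list set" where
  "slit_paths n w h = {s. length s = n \<and> set s \<subseteq> {1, -1} \<and> height s n = h \<and>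
                          (\<forall>i\<le>n. 0 \<le> height s i \<and> height s i \<le> int w)}"

definition path_weight :: "real \<Rightarrow> real \<Rightarrow> nat \<Rightarrow> nat \<Rightarrow> int \<Rightarrow> real" where
  "path_weight a b w n h = (\<Sum>s\<in>slit_paths n w h. a ^ u_count n s * b ^ v_count n w s)"

lemma Zpf_eq_path_weight: "Zpf n w a b = path_weight a b w n 0"
  by (simp add: Zpf_def path_weight_def loops_def slit_paths_def)

lemma finite_slit_paths: "finite (slit_paths n w h)"
proof (rule finite_subset)
  show "slit_paths n w h \<subseteq> {s. set s \<subseteq> {1, -1} \<and> length s = n}"
    by (auto simp: slit_paths_def)
  show "finite {s. set s \<subseteq> {1, -1::int} \<and> length s = n}"
    by (rule finite_lists_length_eq) simp
qed

lemma height_snoc: "i \<le> length s \<Longrightarrow> height (s @ [d]) i = height s i"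
  by (simp add: height_def)

lemma height_snoc_last: "height (s @ [d]) (Suc (length s)) = height s (length s) + d"
  by (simp add: height_def)

lemma path_weight_0:
  assumes "w \<ge> 1"
  shows "path_weight a b w 0 h = (if h = 0 then 1 else 0)"
proof -
  have "slit_paths 0 w h = (if h = 0 then {[]} else {})"
    by (auto simp: slit_paths_def height_def)
  then show ?thesis
    using assms by (simp add: path_weight_def u_count_def v_count_def height_def)
qed

lemma path_weight_outside: "h < 0 \<or> h > int w \<Longrightarrow> path_weight a b w n h = 0"
  by (auto simp: path_weight_def slit_paths_def intro!: sum.neutral)

lemma snoc_mem_slit_paths_iff:
  assumes "length s = n"
  shows "s @ [d] \<in> slit_paths (Suc n) w h \<longleftrightarrow>
    d \<in> {1, -1} \<and> 0 \<le> h \<and> h \<le> int w \<and> s \<in> slit_paths n w (h - d)"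
proof -
  have bounds: "(\<forall>i\<le>Suc n. 0 \<le> height (s @ [d]) i \<and> height (s @ [d]) i \<le> int w) \<longleftrightarrow>
      (\<forall>i\<le>n. 0 \<le> height s i \<and> height s i \<le> int w) \<and> 0 \<le> height s n + d \<and> height s n + d \<le> int w"
    using assms height_snoc[of _ s d] height_snoc_last[of s d] by (auto simp: le_Suc_eq)
  show ?thesis
    unfolding slit_paths_def mem_Collect_eq bounds using assms height_snoc_last[of s d] by auto
qed

lemma length_slit_paths: "s \<in> slit_paths n w h \<Longrightarrow> length s = n"
  by (simp add: slit_paths_def)

lemma slit_paths_Suc:
  "slit_paths (Suc n) w h = (if 0 \<le> h \<and> h \<le> int w then
     (\<lambda>s. s @ [1]) ` slit_paths n w (h - 1) \<union> (\<lambda>s. s @ [-1]) ` slit_paths n w (h + 1) else {})"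
proof (intro set_eqI iffI)
  fix s' assume s': "s' \<in> slit_paths (Suc n) w h"
  then obtain s d where "s' = s @ [d]" and "length s = n"
    using length_slit_paths[OF s'] by (cases s' rule: rev_exhaust) auto
  then show "s' \<in> (if 0 \<le> h \<and> h \<le> int w then
     (\<lambda>s. s @ [1]) ` slit_paths n w (h - 1) \<union> (\<lambda>s. s @ [-1]) ` slit_paths n w (h + 1) else {})"
    using s' snoc_mem_slit_paths_iff[of s n d w h] by auto
next
  fix s' assume "s' \<in> (if 0 \<le> h \<and> h \<le> int w then
     (\<lambda>s. s @ [1]) ` slit_paths n w (h - 1) \<union> (\<lambda>s. s @ [-1]) ` slit_paths n w (h + 1) else {})"
  then show "s' \<in> slit_paths (Suc n) w h"
    using snoc_mem_slit_paths_iff length_slit_paths by (auto split: if_splits)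
qed

lemma counts_snoc:
  assumes "length s = n"
  shows "u_count (Suc n) (s @ [d]) = u_count n s + (if height s n + d = 0 then 1 else 0)"
    and "v_count (Suc n) w (s @ [d]) = v_count n w s + (if height s n + d = int w then 1 else 0)"
proof -
  have "{i \<in> {1..Suc n}. height (s @ [d]) i = 0} =
      {i \<in> {1..n}. height s i = 0} \<union> (if height s n + d = 0 then {Suc n} else {})"
    using assms height_snoc[of _ s d] height_snoc_last[of s d] by (auto simp: le_Suc_eq)
  then show "u_count (Suc n) (s @ [d]) = u_count n s + (if height s n + d = 0 then 1 else 0)"
    unfolding u_count_def by (simp add: card_Un_disjoint)
  have "{i \<in> {0..Suc n}. height (s @ [d]) i = int w} =
      {i \<in> {0..n}. height s i = int w} \<union> (if height s n + d = int w then {Suc n} else {})"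
    using assms height_snoc[of _ s d] height_snoc_last[of s d] by (auto simp: le_Suc_eq)
  then show "v_count (Suc n) w (s @ [d]) = v_count n w s + (if height s n + d = int w then 1 else 0)"
    unfolding v_count_def by (simp add: card_Un_disjoint)
qed

lemma path_weight_Suc:
  assumes "0 \<le> h" and "h \<le> int w"
  shows "path_weight a b w (Suc n) h =
    (if h = 0 then a else 1) * (if h = int w then b else 1) * (path_weight a b w n (h - 1) + path_weight a b w n (h + 1))"
proof -
  define c where "c = (if h = 0 then a else 1) * (if h = int w then b else 1)"
  have snoc_weight: "a ^ u_count (Suc n) (s @ [d]) * b ^ v_count (Suc n) w (s @ [d]) =
      c * (a ^ u_count n s * b ^ v_count n w s)" if "s \<in> slit_paths n w (h - d)" for s d
  proof -
    have "length s = n" and "height s n + d = h" using that by (auto simp: slit_paths_def)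
    then show ?thesis by (simp add: counts_snoc c_def power_add)
  qed
  have "path_weight a b w (Suc n) h =
      (\<Sum>s\<in>(\<lambda>s. s @ [1]) ` slit_paths n w (h - 1). a ^ u_count (Suc n) s * b ^ v_count (Suc n) w s)
      + (\<Sum>s\<in>(\<lambda>s. s @ [-1]) ` slit_paths n w (h + 1). a ^ u_count (Suc n) s * b ^ v_count (Suc n) w s)"
    unfolding path_weight_def slit_paths_Suc if_P[OF conjI[OF assms]]
    by (rule sum.union_disjoint) (auto simp: finite_slit_paths)
  also have "\<dots> = c * path_weight a b w n (h - 1) + c * path_weight a b w n (h + 1)"
    using snoc_weight[of _ 1] snoc_weight[of _ "-1"]
    by (simp add: sum.reindex inj_on_def path_weight_def sum_distrib_left)
  finally show ?thesis by (simp add: c_def distrib_left)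
qed

section \<open>The closed formula\<close>

lemma path_weight_eq_spectral_sum:
  fixes L M :: real
  assumes sq: "rsquarefree (D_poly (of_real L) (of_real M) w)" and w: "w \<ge> 1"
  shows "h \<le> w \<Longrightarrow>
    of_real (path_weight (1 + L) (1 + M) w n (int h)) = spectral_sum (of_real L) (of_real M) w n h"
proof (induction n arbitrary: h)
  case 0
  then show ?case by (simp add: path_weight_0[OF w] spectral_sum_0[OF sq w])
next
  case (Suc n)
  have below: "of_real (path_weight (1 + L) (1 + M) w n (int h - 1)) =
      (if 0 < h then spectral_sum (of_real L) (of_real M) w n (h - 1) else 0)"
    using Suc.IH[of "h - 1"] Suc.prems by (auto simp: of_nat_diff path_weight_outside)
  have above: "of_real (path_weight (1 + L) (1 + M) w n (int h + 1)) =
      (if h < w then spectral_sum (of_real L) (of_real M) w n (h + 1) else 0)"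
    using Suc.IH[of "h + 1"] Suc.prems by (auto simp: path_weight_outside add.commute)
  have "int h \<le> int w" using Suc.prems by simp
  then show ?case
    unfolding spectral_sum_Suc[OF w Suc.prems] path_weight_Suc[OF of_nat_0_le_iff \<open>int h \<le> int w\<close>]
    using w by (simp add: below above neighbour_sum_def weight_def)
qed

lemma w_plus_epsk:
  fixes l m :: real
  assumes D: "poly (D_poly ((of_real l)^2) ((of_real m)^2) w) p = 0" and w: "w \<ge> 1"
    and nz: "(of_real l)^2 - p^2 \<noteq> 0" "(of_real m)^2 - p^2 \<noteq> 0"
      "1 - (of_real l)^2 * p^2 \<noteq> 0" "1 - (of_real m)^2 * p^2 \<noteq> 0"
  shows "(of_nat w + epsk l m p) * (2 * (1 - (of_real l)^2 * p^2) * (1 - (of_real m)^2 * p^2)) =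
    - (p * poly (pderiv (D_poly ((of_real l)^2) ((of_real m)^2) w)) p)"
proof -
  define L M P Q W E where "L = (complex_of_real l)^2" and "M = (complex_of_real m)^2" and "P = p^2"
    and "Q = p^(2*w)" and "W = (of_nat w :: complex)" and "E = epsk l m p"
  have root: "(1 - L*P) * (1 - M*P) = (L - P) * (M - P) * Q"
    using D by (simp add: poly_D_poly L_def M_def P_def Q_def)
  have pD': "p * poly (pderiv (D_poly L M w)) p = - 2*L*P*(1 - M*P) - 2*M*P*(1 - L*P)
      + 2*P*(L + M - 2*P)*Q - 2*W*(L - P)*(M - P)*Q"
    unfolding P_def Q_def W_def by (rule p_mult_pderiv_D_poly[OF w])
  have K: "(1 - L*P) * (L - P) * (1 - M*P) * (M - P) \<noteq> 0"
    using nz by (simp add: L_def M_def P_def)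
  have "E * ((1 - L*P) * (L - P) * (1 - M*P) * (M - P)) = P * (L*(L - P)*(1 - M*P)*(M - P)
      - (1 - L*P)*(1 - M*P)*(M - P) + M*(1 - L*P)*(L - P)*(M - P) - (1 - L*P)*(L - P)*(1 - M*P))"
  proof -
    define a b c d where "a = L / (1 - L*P)" and "b = 1 / (L - P)" and "c = M / (1 - M*P)"
      and "d = 1 / (M - P)"
    have "E = P * (a - b + c - d)"
      unfolding E_def epsk_def L_def[symmetric] M_def[symmetric] P_def[symmetric] a_def b_def c_def d_def ..
    moreover have "a * (1 - L*P) = L" "b * (L - P) = 1" "c * (1 - M*P) = M" "d * (M - P) = 1"
      using nz by (simp_all add: a_def b_def c_def d_def L_def M_def P_def)
    ultimately show ?thesis by algebra
  qed
  then have "((1 - L*P) * (L - P) * (1 - M*P) * (M - P)) *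
      ((W + E) * (2 * (1 - L*P) * (1 - M*P)) + p * poly (pderiv (D_poly L M w)) p) = 0"
    unfolding pD' using root by algebra
  then show ?thesis
    using K by (simp add: L_def M_def P_def W_def E_def eq_neg_iff_add_eq_0)
qed

lemma eigvec_0_at_root:
  assumes "poly (D_poly L M w) p = 0"
  shows "eigvec M w p 0 * (L - p^2) = (1 + L) * (1 - p^2) * (1 - M*p^2)"
proof -
  have "eigvec M w p 0 * (L - p^2) = (L - p^2) * (M - p^2) * p^(2*w) + (1 - M*p^2) * (L - p^2)"
    by (simp add: eigvec_0 algebra_simps)
  also have "(L - p^2) * (M - p^2) * p^(2*w) = (1 - L*p^2) * (1 - M*p^2)"
    using assms by (simp add: poly_D_poly)
  finally show ?thesis by (simp add: algebra_simps)
qed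

lemma spectral_term_eq:
  fixes l m :: real
  assumes D: "poly (D_poly ((of_real l)^2) ((of_real m)^2) w) p = 0" and P: "p^2 \<noteq> 1"
    and w: "w \<ge> 1" and lm: "l^2 * m^2 \<noteq> 1"
  shows "of_real (1 + l^2) / 4 * ((1 - p^2)^2 / (((of_real l)^2 - p^2) * (1 - (of_real l)^2 * p^2))
      * ((1 + p^2) / p)^n * (1 / (of_nat w + epsk l m p)))
    = - (1/2) * (1 - p^2) * eigvec ((of_real m)^2) w p 0 * ((1 + p^2) / p)^n
      / (p * poly (pderiv (D_poly ((of_real l)^2) ((of_real m)^2) w)) p)"
proof -
  let ?L = "(complex_of_real l)^2" and ?M = "(complex_of_real m)^2"
  let ?pD' = "p * poly (pderiv (D_poly ?L ?M w)) p"
  have D_real: "poly (D_poly (of_real (l^2)) (of_real (m^2)) w) p = 0"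
    and D_swap: "poly (D_poly (of_real (m^2)) (of_real (l^2)) w) p = 0"
    using D D_poly_swap by simp_all
  have ml: "m^2 * l^2 \<noteq> 1" using lm by (simp add: mult.commute)
  have L: "?L - p^2 \<noteq> 0" "1 - ?L * p^2 \<noteq> 0"
    using D_poly_root_ne_L[OF D_real P w _ lm] D_poly_root_ne_inv_L[OF D_real P w _ lm] by simp_all
  have M: "?M - p^2 \<noteq> 0" "1 - ?M * p^2 \<noteq> 0"
    using D_poly_root_ne_L[OF D_swap P w _ ml] D_poly_root_ne_inv_L[OF D_swap P w _ ml] by simp_all
  have "?pD' \<noteq> 0"
    using pderiv_D_poly_root_nonzero[OF D_real P w _ _ lm] D_poly_root_nonzero[OF w D] by simp
  have "2 * (1 - ?L * p^2) * (1 - ?M * p^2) \<noteq> 0" using L M by simp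
  then have "of_nat w + epsk l m p = - ?pD' / (2 * (1 - ?L * p^2) * (1 - ?M * p^2))"
    by (subst nonzero_eq_divide_eq) (use w_plus_epsk[OF D w L(1) M(1) L(2) M(2)] in auto)
  then have eps: "1 / (of_nat w + epsk l m p) = 2 * (1 - ?L * p^2) * (1 - ?M * p^2) / - ?pD'"
    by (simp only: inverse_eq_divide[symmetric] inverse_divide)
  have psi: "eigvec ?M w p 0 = (1 + ?L) * (1 - p^2) * (1 - ?M * p^2) / (?L - p^2)"
    using eigvec_0_at_root[OF D] L by (simp add: field_simps)
  have field: "K / 4 * (u^2 / (B * A) * X * (2 * A * C / - E)) = - (1/2) * u * (K * u * C / B) * X / E"
    if "A \<noteq> 0" "B \<noteq> 0" "E \<noteq> 0" for A B E K u X C :: complex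
    using that by (simp add: field_simps power2_eq_square)
  show ?thesis
    unfolding eps psi using field[OF L(2) L(1) \<open>?pD' \<noteq> 0\<close>] by simp
qed

lemma spectral_sum_eq_sum_roots_ne_pm1:
  assumes "rsquarefree (D_poly L M w)"
  shows "spectral_sum L M w n h = (\<Sum>p | poly (D_poly L M w) p = 0 \<and> p^2 \<noteq> 1.
     - (1/2) * (1 - p^2) * eigvec M w p h * ((1 + p^2) / p)^n / (p * poly (pderiv (D_poly L M w)) p))"
  unfolding spectral_sum_def
  by (rule sum.mono_neutral_right) (auto simp: rsquarefree_roots_finite[OF assms])

lemma Zpf_spectral_formula:
  fixes l m :: real
  assumes w: "w \<ge> 1" and sq: "rsquarefree (D_poly (of_real (l^2)) (of_real (m^2)) w)"
    and lm: "l^2 * m^2 \<noteq> 1"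
  shows "complex_of_real (Zpf n w (1 + l^2) (1 + m^2)) =
       of_real (1 + l^2) / 4 *
       (\<Sum>p\<in>{p. Dw l m w p = 0 \<and> p \<noteq> 1 \<and> p \<noteq> -1}.
          (1 - p^2)^2 / (((of_real l)^2 - p^2) * (1 - (of_real l)^2 * p^2))
          * ((1 + p^2) / p) ^ n * (1 / (of_nat w + epsk l m p)))"
proof -
  have roots: "{p. Dw l m w p = 0 \<and> p \<noteq> 1 \<and> p \<noteq> -1} =
      {p. poly (D_poly ((of_real l)^2) ((of_real m)^2) w) p = 0 \<and> p^2 \<noteq> 1}"
    by (auto simp: Dw_eq_poly_D_poly power2_eq_1_iff)
  have "complex_of_real (Zpf n w (1 + l^2) (1 + m^2)) = spectral_sum ((of_real l)^2) ((of_real m)^2) w n 0"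
    using path_weight_eq_spectral_sum[OF sq w, of 0 n] by (simp add: Zpf_eq_path_weight)
  also have "\<dots> = (\<Sum>p\<in>{p. Dw l m w p = 0 \<and> p \<noteq> 1 \<and> p \<noteq> -1}.
      of_real (1 + l^2) / 4 * ((1 - p^2)^2 / (((of_real l)^2 - p^2) * (1 - (of_real l)^2 * p^2))
        * ((1 + p^2) / p) ^ n * (1 / (of_nat w + epsk l m p))))"
    unfolding roots spectral_sum_eq_sum_roots_ne_pm1[OF sq[simplified]]
    using spectral_term_eq[OF _ _ w lm] by (intro sum.cong refl) auto
  finally show ?thesis by (simp add: sum_distrib_left)
qed

theorem mainTheorem5:
  fixes l m :: real
  assumes "l \<ge> 0" and "m \<ge> 0" and "l * m \<noteq> 1"
  shows "\<exists>W. \<forall>w\<ge>W. \<forall>n::nat.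
     complex_of_real (Zpf n w (1 + l^2) (1 + m^2)) =
       of_real (1 + l^2) / 4 *
       (\<Sum>p\<in>{p. Dw l m w p = 0 \<and> p \<noteq> 1 \<and> p \<noteq> -1}.
          (1 - p^2)^2 / (((of_real l)^2 - p^2) * (1 - (of_real l)^2 * p^2))
          * ((1 + p^2) / p) ^ n * (1 / (of_nat w + epsk l m p)))"
proof -
  have lm: "l^2 * m^2 \<noteq> 1"
    using assms power2_eq_1_iff[of "l * m"] mult_nonneg_nonneg[OF assms(1,2)]
    by (auto simp: power_mult_distrib)
  have "eventually (\<lambda>w. w \<ge> 1 \<and> rsquarefree (D_poly (of_real (l^2)) (of_real (m^2)) w)) sequentially"
    using eventually_ge_at_top eventually_rsquarefree_D_poly[OF _ _ lm] by (auto intro: eventually_conj)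
  then obtain W where "\<And>w. w \<ge> W \<Longrightarrow> w \<ge> 1 \<and> rsquarefree (D_poly (of_real (l^2)) (of_real (m^2)) w)"
    by (auto simp: eventually_sequentially)
  then show ?thesis
    using Zpf_spectral_formula[OF _ _ lm] by blast
qed

end
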